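(* Let $G=(V,E)$ be a graph, $c\ge1$, $\epsilon\in[0,1/3)$, let $\kappa(G)=(V,\kappa(E))$ be an $(\epsilon,c)$-kernel of $G$ with tight nodes $\kappa_T(V)$, and let $M$ be a matching in $\kappa(G)$ such that every augmenting path in $\kappa(G)$ with respect to $M$ has length at least five. Let $F_T$ be the set of tight nodes unmatched in $M$. Then for every edge $(u,v)\in M$, $$\big|(\kappa(\mathcal N_u)\cap F_T)\cup(\kappa(\mathcal N_v)\cap F_T)\big|\le(1+\epsilon)c.$$
   Context: Let $\mathcal N_v$ denote the set of neighbors of $v$ in $G$. A subgraph $\kappa(G)=(V,\kappa(E))$ with $\kappa(E)\subseteq E$ is given, together with a partition of $V$ into tight nodes $\kappa_T(V)$ and slack nodes $\kappa_S(V)$. For $v\in V$ let $\kappa(\mathcal N_v)=\{u\in\mathcal N_v:(u,v)\in\kappa(E)\}$ (the friends of $v$). For $c\ge1$ and $\epsilon\in[0,1/3)$, $\kappa(G)$ is an $(\epsilon,c)$-kernel of $G$ (w.r.t. this partition) iff: (i) $|\kappa(\mathcal N_v)|\le(1+\epsilon)c$ for all $v\in V$; (ii) $|\kappa(\mathcal N_v)|\ge(1-\epsilon)c$ for all $v\in\kappa_T(V)$; (iii) for all $u,v\in\kappa_S(V)$, if $(u,v)\in E$ then $(u,v)\in\kappa(E)$. Given a matching $M$ in a graph $H$, an augmenting path of length $2k+1$ ($k \ge 0$) is a simple path in $H$ with $2k+1$ edges whose two end nodes are unmatched in $M$ and whose edges alternate between non-$M$ and $M$ edges (first and last edges not in $M$).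 *)

theory Defs
  imports Complex_Main
begin

definition graph :: "'a set \<Rightarrow> 'a set set \<Rightarrow> bool" where
  "graph V E \<longleftrightarrow> finite V \<and> (\<forall>e\<in>E. \<exists>u v. e = {u, v} \<and> u \<noteq> v \<and> u \<in> V \<and> v \<in> V)"

definition nbrs :: "'a set set \<Rightarrow> 'a \<Rightarrow> 'a set" where
  "nbrs E v = {u. {u, v} \<in> E}"

text \<open>(eps,c)-kernel KE of (V,E) w.r.t. the partition of V into tight nodes T and slack nodes S.\<close>
definition is_kernel :: "'a set \<Rightarrow> 'a set set \<Rightarrow> 'a set set \<Rightarrow> 'a set \<Rightarrow> 'a set \<Rightarrow> real \<Rightarrow> real \<Rightarrow> bool" where
  "is_kernel V E KE T S eps c \<longleftrightarrow>
     KE \<subseteq> E \<and> T \<union> S = V \<and> T \<inter> S = {} \<and>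
     (\<forall>v\<in>V. real (card (nbrs KE v)) \<le> (1 + eps) * c) \<and>
     (\<forall>v\<in>T. real (card (nbrs KE v)) \<ge> (1 - eps) * c) \<and>
     (\<forall>u\<in>S. \<forall>v\<in>S. {u, v} \<in> E \<longrightarrow> {u, v} \<in> KE)"

definition matching :: "'a set set \<Rightarrow> 'a set set \<Rightarrow> bool" where
  "matching H M \<longleftrightarrow> M \<subseteq> H \<and> (\<forall>e1\<in>M. \<forall>e2\<in>M. e1 \<noteq> e2 \<longrightarrow> e1 \<inter> e2 = {})"

definition matched :: "'a set set \<Rightarrow> 'a \<Rightarrow> bool" where
  "matched M v \<longleftrightarrow> (\<exists>e\<in>M. v \<in> e)"

text \<open>An augmenting path in the graph with edge set H w.r.t. M, given as the list of its
  nodes; its length (number of edges) is length p - 1 = 2k+1.\<close>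
definition augmenting_path :: "'a set set \<Rightarrow> 'a set set \<Rightarrow> 'a list \<Rightarrow> bool" where
  "augmenting_path H M p \<longleftrightarrow>
     (\<exists>k. length p = 2 * k + 2) \<and> distinct p \<and>
     (\<forall>i < length p - 1. {p ! i, p ! Suc i} \<in> H \<and>
        ({p ! i, p ! Suc i} \<in> M \<longleftrightarrow> odd i)) \<and>
     \<not> matched M (hd p) \<and> \<not> matched M (last p)"

end

theory Submission
  imports Defs
begin

text \<open>If the matched edge \<open>{u, v}\<close> had two distinct free tight friends \<open>a\<close> of \<open>u\<close> and
  \<open>b\<close> of \<open>v\<close>, then \<open>a, u, v, b\<close> would be an augmenting path of length three. Hence the
  free friends of \<open>u\<close> and of \<open>v\<close> are either all friends of one endpoint, or they form a single
  node; in both cases their number is bounded by the kernel degree bound \<open>(1 + \<epsilon>) c \<ge> 1\<close>.\<close>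

lemma augmenting_path_of_length_three:
  assumes "M \<subseteq> H" and "{u, v} \<in> M" and "u \<noteq> v"
    and "{a, u} \<in> H" and "{v, b} \<in> H" and "a \<noteq> b"
    and "\<not> matched M a" and "\<not> matched M b"
  shows "augmenting_path H M [a, u, v, b]"
proof -
  have "matched M u" "matched M v"
    using assms(2) unfolding matched_def by auto
  then have distinct: "distinct [a, u, v, b]"
    using assms(3,6-8) by auto
  have unmatched_edges: "{a, u} \<notin> M" "{v, b} \<notin> M"
    using assms(7,8) unfolding matched_def by auto
  have "{[a, u, v, b] ! i, [a, u, v, b] ! Suc i} \<in> H \<and>
        ({[a, u, v, b] ! i, [a, u, v, b] ! Suc i} \<in> M \<longleftrightarrow> odd i)" if "i < 3" for i
  proof -
    from that consider "i = 0" | "i = 1" | "i = 2" by linarith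
    then show ?thesis
      using assms(1,2,4,5) unmatched_edges by cases (auto simp: numeral_2_eq_2)
  qed
  then show ?thesis
    unfolding augmenting_path_def using distinct assms(7,8)
    by (auto intro: exI[of _ 1])
qed

lemma free_nbrs_of_matched_edge_eq:
  assumes "matching H M" and "{u, v} \<in> M" and "u \<noteq> v"
    and no_short_path: "\<forall>p. augmenting_path H M p \<longrightarrow> length p - 1 \<ge> 5"
    and "a \<in> nbrs H u" and "\<not> matched M a"
    and "b \<in> nbrs H v" and "\<not> matched M b"
  shows "a = b"
proof (rule ccontr)
  assume "a \<noteq> b"
  with assms have "augmenting_path H M [a, u, v, b]"
    by (intro augmenting_path_of_length_three)
       (auto simp: matching_def nbrs_def insert_commute)
  with no_short_path show False by fastforce
qed

lemma card_Un_le_if_cross_eq: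
  assumes "finite A" and "finite B" and "\<forall>a\<in>A. \<forall>b\<in>B. a = b"
  shows "card (A \<union> B) \<le> max 1 (max (card A) (card B))"
proof (cases "A = {} \<or> B = {}")
  case True
  then show ?thesis by auto
next
  case False
  then obtain a b where "a \<in> A" "b \<in> B" by auto
  with assms(3) have "x = a" if "x \<in> A \<union> B" for x
    using that by (metis UnE)
  with \<open>a \<in> A\<close> have "A \<union> B = {a}" by blast
  then show ?thesis by simp
qed

lemma nbrs_subset_vertices:
  assumes "graph V E" and "H \<subseteq> E"
  shows "nbrs H w \<subseteq> V"
  using assms unfolding graph_def nbrs_def by (fastforce simp: doubleton_eq_iff)

lemma edge_endpoints_in_vertices:
  assumes "graph V E" and "{u, v} \<in> E"
  shows "u \<in> V" and "v \<in> V" and "u \<noteq> v"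
  using assms unfolding graph_def by (auto simp: doubleton_eq_iff)

lemma card_nbrs_subset_le_kernel_bound:
  assumes "graph V E" and "is_kernel V E KE T S eps c" and "w \<in> V"
  shows "real (card (nbrs KE w \<inter> F)) \<le> (1 + eps) * c"
proof -
  have "finite (nbrs KE w)"
    using assms(1,2) nbrs_subset_vertices[of V E KE w]
    by (auto simp: graph_def is_kernel_def intro: finite_subset)
  then have "card (nbrs KE w \<inter> F) \<le> card (nbrs KE w)"
    by (simp add: card_mono)
  moreover have "real (card (nbrs KE w)) \<le> (1 + eps) * c"
    using assms(2,3) unfolding is_kernel_def by auto
  ultimately show ?thesis by linarith
qed

theorem lemma3p13:
  fixes V :: "'a set" and E KE M :: "'a set set" and T S :: "'a set" and eps c :: real
  assumes "graph V E"
    and "c \<ge> 1" and "0 \<le> eps" and "eps < 1/3"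
    and "is_kernel V E KE T S eps c"
    and "matching KE M"
    and "\<forall>p. augmenting_path KE M p \<longrightarrow> length p - 1 \<ge> 5"
    and "{u, v} \<in> M"
  shows "real (card ((nbrs KE u \<inter> {x\<in>T. \<not> matched M x}) \<union> (nbrs KE v \<inter> {x\<in>T. \<not> matched M x})))
           \<le> (1 + eps) * c"
proof -
  define F where "F = {x\<in>T. \<not> matched M x}"
  have "{u, v} \<in> E"
    using assms(5,6,8) unfolding is_kernel_def matching_def by auto
  note endpoints = edge_endpoints_in_vertices[OF assms(1) this]
  have bound_u: "real (card (nbrs KE u \<inter> F)) \<le> (1 + eps) * c"
    and bound_v: "real (card (nbrs KE v \<inter> F)) \<le> (1 + eps) * c"
    using card_nbrs_subset_le_kernel_bound[OF assms(1,5)] endpoints by auto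
  have "finite (nbrs KE u \<inter> F)" "finite (nbrs KE v \<inter> F)"
    using assms(1,5) nbrs_subset_vertices[of V E KE]
    by (auto simp: graph_def is_kernel_def intro: finite_subset)
  moreover have "\<forall>a\<in>nbrs KE u \<inter> F. \<forall>b\<in>nbrs KE v \<inter> F. a = b"
    using free_nbrs_of_matched_edge_eq[OF assms(6,8) endpoints(3) assms(7)]
    unfolding F_def by blast
  ultimately have "card ((nbrs KE u \<inter> F) \<union> (nbrs KE v \<inter> F))
      \<le> max 1 (max (card (nbrs KE u \<inter> F)) (card (nbrs KE v \<inter> F)))"
    by (rule card_Un_le_if_cross_eq)
  moreover have "1 \<le> (1 + eps) * c"
    using assms(2,3) mult_mono[of 1 "1 + eps" 1 c] by simp
  ultimately show ?thesis
    using bound_u bound_v unfolding F_def by (auto simp: max_def split: if_splits)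
qed

end
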